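(* Let $m\ge1$, $q=2^m$, let $n$ be even, let $L$ be a $2$-linear polynomial over $\mathbb F_{q^n}$, and let $A\in\mathbb F_{q^n}^*$. Then $\mathrm{Tr}(x^{q+1})+L(x)$ is a permutation polynomial of $\mathbb F_{q^n}$ if and only if $\ker(\mathrm{Tr}_2\circ L^\prime)\subseteq\ker\mathrm{Tr}$ and $\ker L=\{0\}$. If $A^{\frac{q^n-1}{q+1}}\ne1$, then $\mathrm{Tr}(Ax^{q+1})+L(x)$ is not a permutation polynomial of $\mathbb F_{q^n}$.
   Context: $\mathrm{Tr}$ denotes the trace map of $\mathbb F_{q^n}$ over $\mathbb F_q$ and $\mathrm{Tr}_2$ the trace map of $\mathbb F_{q^n}$ over $\mathbb F_{q^2}$. A $2$-linear polynomial over $\mathbb F_{q^n}$ has the form $L(x)=\sum_{j=0}^{mn-1}a_jx^{2^j}$; its adjoint is $L^\prime(x)=\sum_j(a_jx)^{2^{-j}}$, where $y\mapsto y^{2^{-j}}$ is the inverse of $y\mapsto y^{2^j}$ on $\mathbb F_{q^n}$. Polynomials are regarded as maps on $\mathbb F_{q^n}$; $\ker$ denotes the kernel of an additive map. *)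

theory Defs
  imports Main
begin

definition tr :: "nat \<Rightarrow> nat \<Rightarrow> 'a::field \<Rightarrow> 'a" where
  "tr q n x = (\<Sum>i<n. x ^ (q ^ i))"

definition tr2 :: "nat \<Rightarrow> nat \<Rightarrow> 'a::field \<Rightarrow> 'a" where
  "tr2 q n x = (\<Sum>i<n div 2. x ^ ((q ^ 2) ^ i))"

definition lin2 :: "nat \<Rightarrow> (nat \<Rightarrow> 'a::field) \<Rightarrow> 'a \<Rightarrow> 'a" where
  "lin2 N a x = (\<Sum>j<N. a j * x ^ (2 ^ j))"

definition frob_inv :: "nat \<Rightarrow> 'a::field \<Rightarrow> 'a" where
  "frob_inv j y = inv (\<lambda>z::'a. z ^ (2 ^ j)) y"

definition adj2 :: "nat \<Rightarrow> (nat \<Rightarrow> 'a::field) \<Rightarrow> 'a \<Rightarrow> 'a" where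
  "adj2 N a x = (\<Sum>j<N. frob_inv j (a j * x))"

definition addker :: "('a \<Rightarrow> 'b::zero) \<Rightarrow> 'a set" where
  "addker f = {x. f x = 0}"

end

theory Submission
  imports Defs "HOL-Computational_Algebra.Polynomial"
begin

(*
  Write f(x) = Tr(A x^(q+1)) + L(x).  In characteristic 2,
  f(x + h) = f(x) + f(h) + Tr(x b(h)) with b(h) = (A h)^(q^(n-1)) + A h^q, so f is injective
  iff no h /= 0 has f(h) in the image of x |-> Tr(x b(h)), which is {0} if b(h) = 0 and
  F_q otherwise.  For A = 1, b(h) = 0 exactly on F_(q^2), where Tr(h^(q+1)) = n h^(q+1) = 0
  because n is even.  Hence f permutes F iff L is injective and L^(-1)(F_q) is contained in
  F_(q^2), i.e. F_q is contained in L(F_(q^2)).  Under the nondegenerate F_2-bilinear form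
  Tr_(F/F_2)(x y) the kernels of Tr and of Tr_2 o L' are the orthogonal complements of F_q
  and of L(F_(q^2)), and taking complements reverses the inclusion.
  For general A, b(h) = 0 with h /= 0 makes A^(q-1) a (q+1)-st power, which forces
  A^((q^n-1)/(q+1)) = 1; otherwise any h /= 0 with L(h) in F_q (a preimage of 1 or a kernel
  element of L) has f(h) in F_q = image, so f is not injective.
*)

definition add_closed :: "'a::monoid_add set \<Rightarrow> bool" where
  "add_closed S \<longleftrightarrow> 0 \<in> S \<and> (\<forall>x\<in>S. \<forall>y\<in>S. x + y \<in> S)"

lemma add_closed_image:
  assumes "additive f" and "add_closed S"
  shows "add_closed (f ` S)"
proof -
  have "f 0 \<in> f ` S" and "f x + f y \<in> f ` S" if "x \<in> S" "y \<in> S" for x y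
    using assms that by (auto simp: add_closed_def additive.add[OF assms(1), symmetric])
  then show ?thesis
    using assms by (auto simp: add_closed_def additive.zero)
qed

lemma bij_vimage_subset_iff:
  assumes "bij f"
  shows "f -` B \<subseteq> C \<longleftrightarrow> B \<subseteq> f ` C"
  using assms by (metis bij_is_inj bij_is_surj image_mono inj_vimage_image_eq surj_image_vimage_eq vimage_mono)

lemma (in additive) inj_iff_eq_0: "inj f \<longleftrightarrow> (\<forall>x. f x = 0 \<longrightarrow> x = 0)"
proof
  show "inj f \<Longrightarrow> \<forall>x. f x = 0 \<longrightarrow> x = 0"
    using zero injD[of f _ 0] by auto
  assume ker: "\<forall>x. f x = 0 \<longrightarrow> x = 0"
  show "inj f"
  proof (rule injI)
    fix x y
    assume "f x = f y"
    then show "x = y"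
      using ker[rule_format, of "x - y"] by (simp add: diff)
  qed
qed

lemma (in additive) addker_eq_0_iff_inj: "addker f = {0} \<longleftrightarrow> inj f"
  unfolding inj_iff_eq_0 addker_def using zero by blast

lemma inj_iff_shift_neq:
  fixes f :: "'a::ab_group_add \<Rightarrow> 'b"
  shows "inj f \<longleftrightarrow> (\<forall>x h. h \<noteq> 0 \<longrightarrow> f (x + h) \<noteq> f x)"
proof
  show "inj f \<Longrightarrow> \<forall>x h. h \<noteq> 0 \<longrightarrow> f (x + h) \<noteq> f x"
    by (auto dest!: injD)
  assume shift: "\<forall>x h. h \<noteq> 0 \<longrightarrow> f (x + h) \<noteq> f x"
  show "inj f"
  proof (rule injI)
    fix u v
    assume "f u = f v"
    then show "u = v"
      using shift[rule_format, of "v - u" u] by auto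
  qed
qed

section \<open>Finite fields\<close>

(* The library's finite_field_power_card_eq_same needs sort finite_field, which the type of
   the main theorem does not carry. *)
lemma power_card_minus_one:
  fixes x :: "'a::{finite,field}"
  assumes "x \<noteq> 0"
  shows "x ^ (card (UNIV :: 'a set) - 1) = 1"
proof -
  let ?U = "UNIV - {0 :: 'a}"
  have "(\<Prod>y\<in>?U. x * y) = (\<Prod>y\<in>?U. y)"
    by (rule prod.reindex_bij_witness[of _ "\<lambda>y. y / x" "\<lambda>y. x * y"]) (use assms in auto)
  moreover have "(\<Prod>y\<in>?U. x * y) = x ^ card ?U * (\<Prod>y\<in>?U. y)"
    by (simp add: prod.distrib)
  moreover have "(\<Prod>y\<in>?U. y) \<noteq> 0"
    by simp
  ultimately show ?thesis
    by (simp add: card_Diff_singleton)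
qed

lemma power_card_eq_self:
  fixes x :: "'a::{finite,field}"
  shows "x ^ card (UNIV :: 'a set) = x"
proof (cases "x = 0")
  case False
  have "card (UNIV :: 'a set) = Suc (card (UNIV :: 'a set) - 1)"
    using finite_UNIV_card_ge_0[where 'a = 'a] by simp
  then show ?thesis
    by (metis False power_Suc power_card_minus_one mult_1_right)
qed (simp add: finite_UNIV_card_ge_0)

lemma card_field_ge_2: "card (UNIV :: 'a::{finite,field} set) \<ge> 2"
proof -
  have "{0, 1 :: 'a} \<subseteq> UNIV" by simp
  then have "card {0, 1 :: 'a} \<le> card (UNIV :: 'a set)" by (rule card_mono[OF finite])
  then show ?thesis by simp
qed

lemma tr_not_identically_zero:
  assumes card: "card (UNIV :: 'a::{finite,field} set) = Q ^ n" and "n > 0"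
  shows "\<exists>x::'a. tr Q n x \<noteq> 0"
proof (rule ccontr)
  define p :: "'a poly" where "p = (\<Sum>i<n. monom 1 (Q ^ i))"
  assume "\<not> (\<exists>x::'a. tr Q n x \<noteq> 0)"
  then have roots: "{x. poly p x = 0} = UNIV"
    by (auto simp: p_def poly_sum poly_monom tr_def)
  have "Q \<ge> 2"
    using card_field_ge_2[where 'a = 'a] card \<open>n > 0\<close>
    by (metis One_nat_def less_2_cases not_le power_0_left power_one nat_less_le)
  then have "coeff p (Q ^ (n - 1)) = 1"
    using \<open>n > 0\<close> by (simp add: p_def coeff_sum)
  then have "p \<noteq> 0" by auto
  have "degree p \<le> Q ^ (n - 1)"
    unfolding p_def using \<open>Q \<ge> 2\<close>
    by (intro degree_sum_le) (auto intro: order.trans[OF degree_monom_le] power_increasing)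
  also have "\<dots> < card (UNIV :: 'a set)"
    using \<open>Q \<ge> 2\<close> \<open>n > 0\<close> card by (simp add: power_strict_increasing)
  finally show False
    using card_poly_roots_bound[OF \<open>p \<noteq> 0\<close>] roots by simp
qed

lemma succ_dvd_power_minus_one:
  fixes q n :: nat
  assumes "even n"
  shows "q + 1 dvd q ^ n - 1"
proof (cases q)
  case 0
  then show ?thesis
    by (cases n) simp_all
next
  case (Suc p)
  have "q * q = 1 + p * (q + 1)"
    by (simp add: Suc algebra_simps)
  then have "q * q mod (q + 1) = 1 mod (q + 1)"
    by (simp only: mod_mult_self1)
  moreover have "q ^ n = (q * q) ^ (n div 2)"
    by (metis assms dvd_mult_div_cancel power_mult power2_eq_square)
  ultimately have "q ^ n mod (q + 1) = 1 mod (q + 1)"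
    by (metis power_mod power_one)
  then show ?thesis
    using mod_eq_dvd_iff_nat[of 1 "q ^ n" "q + 1"] Suc by simp
qed

lemma power_card_div_eq_1:
  fixes A u :: "'a::{finite,field}"
  assumes card: "card (UNIV :: 'a set) = q ^ n" and "even q" "even n"
    and "A \<noteq> 0" and A_power: "A ^ (q - 1) = u ^ (q + 1)"
  shows "A ^ ((q ^ n - 1) div (q + 1)) = 1"
proof -
  define e where "e = (q ^ n - 1) div (q + 1)"
  have e: "(q + 1) * e = card (UNIV :: 'a set) - 1"
    unfolding e_def card by (rule dvd_mult_div_cancel[OF succ_dvd_power_minus_one[OF \<open>even n\<close>]])
  have "u \<noteq> 0"
    using A_power \<open>A \<noteq> 0\<close> by auto
  have "A ^ ((q - 1) * e) = u ^ ((q + 1) * e)"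
    by (simp only: power_mult A_power)
  also have "\<dots> = 1"
    unfolding e by (rule power_card_minus_one[OF \<open>u \<noteq> 0\<close>])
  finally have "A ^ ((q - 1) * e) = 1" .
  moreover have "A ^ ((q + 1) * e) = 1"
    unfolding e by (rule power_card_minus_one[OF \<open>A \<noteq> 0\<close>])
  moreover have "q > 0"
    using card card_field_ge_2[where 'a = 'a] by (cases q) (auto simp: power_0_left split: if_splits)
  define r where "r = q div 2 - 1"
  have r: "q - 1 = 2 * r + 1" and "q + 1 = (q - 1) + 2"
    using \<open>q > 0\<close> \<open>even q\<close> by (auto simp: r_def elim!: evenE)
  ultimately have "A ^ (2 * e) = 1"
    by (metis add_mult_distrib power_add mult_1)
  moreover have "A ^ ((q - 1) * e) = (A ^ (2 * e)) ^ r * A ^ e"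
    unfolding r by (simp add: power_add power_mult[symmetric] algebra_simps)
  ultimately show ?thesis
    using \<open>A ^ ((q - 1) * e) = 1\<close> by (simp add: e_def)
qed

(* For Q = 2^k with k dividing N this is the subfield F_Q. *)
definition frob_fixed :: "nat \<Rightarrow> 'a::field set" where
  "frob_fixed Q = {x. x ^ Q = x}"

lemma power_power_eq_self:
  assumes "(x::'a::monoid_mult) ^ Q = x"
  shows "x ^ (Q ^ i) = x"
  by (induction i) (simp_all add: power_mult assms)

lemma tr_power_base:
  assumes "card (UNIV :: 'a::{finite,field} set) = Q ^ n"
  shows "tr Q n ((x::'a) ^ Q) = tr Q n x"
proof -
  let ?f = "\<lambda>i. x ^ Q ^ i"
  have "?f 0 + tr Q n (x ^ Q) = (\<Sum>i<Suc n. ?f i)"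
    unfolding sum.lessThan_Suc_shift by (simp add: tr_def power_mult[symmetric])
  also have "\<dots> = tr Q n x + ?f 0"
    using power_card_eq_self[of x] by (simp add: tr_def assms)
  finally show ?thesis
    by (simp add: add.commute)
qed

lemma tr_power_base_power:
  assumes "card (UNIV :: 'a::{finite,field} set) = Q ^ n"
  shows "tr Q n ((x::'a) ^ Q ^ j) = tr Q n x"
proof (induction j)
  case (Suc j)
  have "tr Q n (x ^ Q ^ Suc j) = tr Q n ((x ^ Q ^ j) ^ Q)"
    by (simp add: power_mult[symmetric] mult.commute)
  also have "\<dots> = tr Q n (x ^ Q ^ j)"
    by (rule tr_power_base[OF assms])
  also have "\<dots> = tr Q n x"
    by (rule Suc.IH)
  finally show ?case .
qed simp

lemma tr_zero [simp]: "Q > 0 \<Longrightarrow> tr Q n (0::'a::field) = 0"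
  by (simp add: tr_def power_0_left)

lemma tr_mult_fixed:
  assumes "w \<in> frob_fixed Q"
  shows "tr Q n (w * y) = w * tr Q n y"
  using assms by (simp add: tr_def frob_fixed_def power_mult_distrib power_power_eq_self sum_distrib_left)

section \<open>Finite fields of characteristic two\<close>

locale binary_field =
  fixes N :: nat
  assumes card_UNIV: "card (UNIV :: 'a::{finite,field} set) = 2 ^ N"
begin

lemma N_pos: "N > 0"
proof (rule ccontr)
  assume "\<not> N > 0"
  then have "card (UNIV :: 'a set) = 1"
    by (simp add: card_UNIV)
  then show False
    using card_field_ge_2[where 'a = 'a] by simp
qed

lemma CHAR_eq_2: "CHAR('a) = 2"
proof -
  have "(-1 :: 'a) = (-1) ^ card (UNIV :: 'a set)"
    by (simp add: power_card_eq_self)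
  also have "\<dots> = 1"
    using N_pos by (simp add: card_UNIV)
  finally have "of_nat 2 = (0 :: 'a)"
    by (metis add.inverse_inverse neg_eq_iff_add_eq_0 of_nat_1 of_nat_add one_add_one)
  then have "CHAR('a) dvd 2"
    by (simp only: of_nat_eq_0_iff_char_dvd)
  then show ?thesis
    using CHAR_not_1 two_is_prime_nat by (metis prime_nat_iff One_nat_def)
qed

lemma frobenius_add: "((x::'a) + y) ^ (2 ^ k) = x ^ (2 ^ k) + y ^ (2 ^ k)"
  by (rule freshmans_dream') (simp_all add: CHAR_eq_2)

lemma frobenius_sum: "(sum (f :: _ \<Rightarrow> 'a) S) ^ (2 ^ k) = (\<Sum>i\<in>S. f i ^ (2 ^ k))"
  by (rule freshmans_dream_sum') (simp_all add: CHAR_eq_2)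

lemma add_self [simp]: "(x::'a) + x = 0"
  by (metis CHAR_eq_2 uminus_CHAR_2 add.right_inverse)

lemma add_eq_0_iff_eq: "(x::'a) + y = 0 \<longleftrightarrow> x = y"
  by (metis add_self add_eq_0_iff)

lemma inj_frobenius: "inj (\<lambda>x::'a. x ^ (2 ^ k))"
proof (rule injI)
  fix x y :: 'a
  assume "x ^ 2 ^ k = y ^ 2 ^ k"
  then have "(x + y) ^ 2 ^ k = 0"
    by (simp add: frobenius_add)
  then show "x = y"
    by (simp add: add_eq_0_iff_eq)
qed

lemma frob_inv_power: "frob_inv j (y::'a) ^ (2 ^ j) = y"
  using finite_UNIV_inj_surj[OF finite inj_frobenius] unfolding frob_inv_def
  by (meson surj_f_inv_f)

lemma additive_tr: "additive (tr (2 ^ k) n :: 'a \<Rightarrow> 'a)"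
  by unfold_locales (simp add: tr_def power_mult[symmetric] frobenius_add sum.distrib)

lemmas tr_add = additive.add[OF additive_tr]

lemma tr_in_frob_fixed:
  assumes "k * n = N"
  shows "tr (2 ^ k) n (y::'a) \<in> frob_fixed (2 ^ k)"
proof -
  have "tr (2 ^ k) n y ^ 2 ^ k = tr (2 ^ k) n (y ^ 2 ^ k)"
    by (simp add: tr_def frobenius_sum power_mult[symmetric] mult.commute)
  also have "\<dots> = tr (2 ^ k) n y"
    by (rule tr_power_base) (simp add: card_UNIV flip: assms power_mult)
  finally show ?thesis
    by (simp add: frob_fixed_def)
qed

lemma tr_tower: "tr 2 k (tr (2 ^ k) n (y::'a)) = tr 2 (k * n) y"
proof -
  have "tr 2 k (tr (2 ^ k) n y) = (\<Sum>j<k. \<Sum>i<n. y ^ 2 ^ (i * k + j))"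
    by (simp add: tr_def frobenius_sum power_mult[symmetric] power_add mult.commute)
  also have "\<dots> = (\<Sum>i<n. \<Sum>l\<in>{i * k..<i * k + k}. y ^ 2 ^ l)"
    by (subst sum.swap) (simp add: sum.atLeastLessThan_shift_0 atLeast0LessThan add.commute)
  also have "\<dots> = tr 2 (k * n) y"
    by (simp add: sum.nat_group tr_def mult.commute)
  finally show ?thesis .
qed

lemma range_tr_mult:
  assumes "k * n = N" and "(b::'a) \<noteq> 0"
  shows "range (\<lambda>x. tr (2 ^ k) n (x * b)) = frob_fixed (2 ^ k)"
proof
  show "range (\<lambda>x. tr (2 ^ k) n (x * b)) \<subseteq> frob_fixed (2 ^ k)"
    using tr_in_frob_fixed[OF assms(1)] by auto
  have "n > 0"
    using assms(1) N_pos by (metis mult_0_right neq0_conv)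
  then obtain y :: 'a where y: "tr (2 ^ k) n y \<noteq> 0"
    using tr_not_identically_zero card_UNIV assms(1) by (metis power_mult)
  show "frob_fixed (2 ^ k) \<subseteq> range (\<lambda>x. tr (2 ^ k) n (x * b))"
  proof
    fix c :: 'a
    assume c: "c \<in> frob_fixed (2 ^ k)"
    define t where "t = tr (2 ^ k) n y"
    have "c / t \<in> frob_fixed (2 ^ k)"
      using c tr_in_frob_fixed[OF assms(1), of y] by (simp add: frob_fixed_def power_divide t_def)
    then have "tr (2 ^ k) n (c / t * y) = c / t * t"
      unfolding t_def by (rule tr_mult_fixed)
    then have "tr (2 ^ k) n (c / t * y / b * b) = c"
      using y assms(2) by (simp add: t_def)
    then show "c \<in> range (\<lambda>x. tr (2 ^ k) n (x * b))"
      by (metis rangeI)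
  qed
qed

lemma add_closed_frob_fixed: "add_closed (frob_fixed (2 ^ k) :: 'a set)"
  by (simp add: add_closed_def frob_fixed_def frobenius_add power_0_left)

end

section \<open>Trace duality\<close>

context binary_field
begin

definition orth :: "'a set \<Rightarrow> 'a set" where
  "orth S = {x. \<forall>s\<in>S. tr 2 N (x * s) = 0}"

lemma abs_tr_add: "tr 2 N ((x::'a) + y) = tr 2 N x + tr 2 N y"
  using tr_add[of 1] by simp

lemma abs_tr_0_or_1: "tr 2 N (x::'a) = 0 \<or> tr 2 N x = 1"
proof -
  have "tr 2 N x ^ 2 = tr 2 N x"
    using tr_in_frob_fixed[of 1 N x] by (simp add: frob_fixed_def)
  then have "tr 2 N x * (tr 2 N x - 1) = 0"
    by (simp add: power2_eq_square algebra_simps)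
  then show ?thesis
    by simp
qed

lemma card_zeros_half:
  fixes \<phi> :: "'a \<Rightarrow> 'a"
  assumes G: "add_closed G"
    and additive: "\<And>x y. x \<in> G \<Longrightarrow> y \<in> G \<Longrightarrow> \<phi> (x + y) = \<phi> x + \<phi> y"
    and zero_or_one: "\<And>x. x \<in> G \<Longrightarrow> \<phi> x = 0 \<or> \<phi> x = 1"
    and g: "g \<in> G" "\<phi> g = 1"
  shows "2 * card {x\<in>G. \<phi> x = 0} = card G"
proof -
  let ?Z = "{x\<in>G. \<phi> x = 0}" and ?O = "{x\<in>G. \<phi> x = 1}"
  have "bij_betw (\<lambda>x. x + g) ?Z ?O"
    by (rule bij_betw_byWitness[where f' = "\<lambda>x. x + g"])
      (use G g additive in \<open>auto simp: add_closed_def add.assoc\<close>)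
  then have "card ?Z = card ?O"
    by (rule bij_betw_same_card)
  moreover have "G = ?Z \<union> ?O" and "?Z \<inter> ?O = {}"
    using zero_or_one by auto
  ultimately show ?thesis
    by (metis card_Un_disjoint finite mult_2)
qed

lemma card_orth_singleton_half:
  assumes "(s::'a) \<noteq> 0"
  shows "2 * card {x. tr 2 N (x * s) = 0} = card (UNIV :: 'a set)"
proof -
  obtain y :: 'a where "tr 2 N y \<noteq> 0"
    using tr_not_identically_zero[of 2 N] card_UNIV N_pos by auto
  then have "tr 2 N (y / s * s) = 1"
    using assms abs_tr_0_or_1[of y] by simp
  then show ?thesis
    using card_zeros_half[of UNIV "\<lambda>x. tr 2 N (x * s)" "y / s"]
    by (simp add: add_closed_def distrib_right abs_tr_add abs_tr_0_or_1)
qed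

lemma card_inter_orth_singleton_half:
  assumes "add_closed S" and "x \<notin> orth S"
  shows "2 * card {s\<in>S. tr 2 N (x * s) = 0} = card S"
proof -
  obtain g where "g \<in> S" "tr 2 N (x * g) = 1"
    using assms(2) abs_tr_0_or_1 by (auto simp: orth_def)
  then show ?thesis
    using card_zeros_half[of S "\<lambda>s. tr 2 N (x * s)" g] assms(1)
    by (simp add: distrib_left abs_tr_add abs_tr_0_or_1)
qed

(* Double count the pairs (x, s) with Tr(x s) = 0: for fixed s /= 0 half of all x qualify,
   for fixed x outside orth S half of S. *)
lemma card_mult_card_orth:
  assumes "add_closed S"
  shows "card S * card (orth S) = card (UNIV :: 'a set)"
proof -
  let ?F = "card (UNIV :: 'a set)"
  have "0 \<in> S"
    using assms by (simp add: add_closed_def)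
  have "2 * card {x. tr 2 N (x * s) = 0} = ?F + (if s = 0 then ?F else 0)" for s :: 'a
    by (cases "s = 0") (simp_all add: card_orth_singleton_half)
  then have "2 * (\<Sum>s\<in>S. card {x. tr 2 N (x * s) = 0}) = (\<Sum>s\<in>S. ?F + (if s = 0 then ?F else 0))"
    by (simp add: sum_distrib_left)
  also have "\<dots> = card S * ?F + ?F"
    using \<open>0 \<in> S\<close> by (simp add: sum.distrib)
  finally have rows: "2 * (\<Sum>s\<in>S. card {x. tr 2 N (x * s) = 0}) = card S * ?F + ?F" .
  have "2 * card {s\<in>S. tr 2 N (x * s) = 0} = card S + (if x \<in> orth S then card S else 0)"
    for x :: 'a
  proof (cases "x \<in> orth S")
    case True
    then have "{s\<in>S. tr 2 N (x * s) = 0} = S"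
      by (auto simp: orth_def)
    then show ?thesis
      using True by simp
  qed (simp add: card_inter_orth_singleton_half[OF assms])
  then have "2 * (\<Sum>x\<in>UNIV. card {s\<in>S. tr 2 N (x * s) = 0})
      = (\<Sum>x\<in>UNIV. card S + (if x \<in> orth S then card S else 0))"
    by (simp add: sum_distrib_left)
  also have "\<dots> = ?F * card S + card (orth S) * card S"
    by (simp add: sum.distrib sum.If_cases)
  finally have columns:
    "2 * (\<Sum>x\<in>UNIV. card {s\<in>S. tr 2 N (x * s) = 0}) = ?F * card S + card (orth S) * card S" .
  have "(\<Sum>s\<in>S. card {x. tr 2 N (x * s) = 0}) = (\<Sum>x\<in>UNIV. card {s\<in>S. tr 2 N (x * s) = 0})"
    using sum.swap_restrict[of S UNIV "\<lambda>_ _. 1::nat" "\<lambda>s x. tr 2 N (x * s) = 0"]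
    by (simp flip: card_eq_sum)
  then show ?thesis
    using rows columns by (simp add: algebra_simps)
qed

lemma add_closed_orth: "add_closed (orth S)"
  by (auto simp: add_closed_def orth_def distrib_right abs_tr_add)

lemma orth_orth:
  assumes "add_closed S"
  shows "orth (orth S) = S"
proof -
  have "S \<subseteq> orth (orth S)"
    by (auto simp: orth_def mult.commute)
  moreover have "card (orth (orth S)) = card S"
  proof -
    have "card (orth S) * card (orth (orth S)) = card (orth S) * card S"
      using card_mult_card_orth[OF assms] card_mult_card_orth[OF add_closed_orth] by (metis mult.commute)
    moreover have "card (orth S) > 0"
      using add_closed_orth[of S] by (auto simp: add_closed_def card_gt_0_iff)
    ultimately show ?thesis
      by auto
  qed
  ultimately show ?thesis
    by (metis card_subset_eq finite)
qed

lemma orth_subset_orth_iff: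
  assumes "add_closed S" and "add_closed S'"
  shows "orth S \<subseteq> orth S' \<longleftrightarrow> S' \<subseteq> S"
proof
  assume "orth S \<subseteq> orth S'"
  then have "orth (orth S') \<subseteq> orth (orth S)"
    by (auto simp: orth_def)
  then show "S' \<subseteq> S"
    by (simp add: orth_orth assms)
qed (auto simp: orth_def)

lemma tr_eq_0_iff_orth:
  assumes "k * n = N"
  shows "tr (2 ^ k) n (x::'a) = 0 \<longleftrightarrow> x \<in> orth (frob_fixed (2 ^ k))"
proof -
  have abs_tr: "tr 2 N (x * w) = tr 2 k (w * tr (2 ^ k) n x)" if "w \<in> frob_fixed (2 ^ k)" for w
  proof -
    have "tr 2 N (x * w) = tr 2 k (tr (2 ^ k) n (w * x))"
      using tr_tower[of k n "w * x"] assms by (simp add: mult.commute)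
    then show ?thesis
      by (simp add: tr_mult_fixed[OF that])
  qed
  show ?thesis
  proof
    assume "tr (2 ^ k) n x = 0"
    then show "x \<in> orth (frob_fixed (2 ^ k))"
      by (simp add: orth_def abs_tr)
  next
    assume x: "x \<in> orth (frob_fixed (2 ^ k))"
    show "tr (2 ^ k) n x = 0"
    proof (rule ccontr)
      assume nonzero: "tr (2 ^ k) n x \<noteq> 0"
      obtain y :: 'a where "tr 2 N y \<noteq> 0"
        using tr_not_identically_zero[of 2 N] card_UNIV N_pos by auto
      define w where "w = tr (2 ^ k) n y / tr (2 ^ k) n x"
      have w: "w \<in> frob_fixed (2 ^ k)"
        using tr_in_frob_fixed[OF assms] by (simp add: w_def frob_fixed_def power_divide)
      have "tr 2 N (x * w) = tr 2 k (w * tr (2 ^ k) n x)"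
        by (rule abs_tr[OF w])
      also have "w * tr (2 ^ k) n x = tr (2 ^ k) n y"
        using nonzero by (simp add: w_def)
      also have "tr 2 k (tr (2 ^ k) n y) = tr 2 N y"
        by (simp add: tr_tower assms)
      finally show False
        using x w \<open>tr 2 N y \<noteq> 0\<close> by (auto simp: orth_def)
    qed
  qed
qed

lemma additive_lin2: "additive (lin2 K a :: 'a \<Rightarrow> 'a)"
  by unfold_locales (simp add: lin2_def frobenius_add distrib_left sum.distrib)

lemma tr_adj2_mult: "tr 2 N (adj2 K a x * v) = tr 2 N ((x::'a) * lin2 K a v)"
proof -
  have tr_frobenius: "tr 2 N (z ^ 2 ^ j) = tr 2 N z" for z :: 'a and j
    by (rule tr_power_base_power) (simp add: card_UNIV)
  have abs_tr_sum: "tr 2 N (sum f S) = (\<Sum>i\<in>S. tr 2 N (f i))" for f :: "nat \<Rightarrow> 'a" and S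
    using additive.sum[OF additive_tr[of 1]] by simp
  have "tr 2 N (adj2 K a x * v) = (\<Sum>j<K. tr 2 N ((frob_inv j (a j * x) * v) ^ 2 ^ j))"
    by (simp add: adj2_def sum_distrib_right abs_tr_sum tr_frobenius)
  also have "\<dots> = (\<Sum>j<K. tr 2 N (x * (a j * v ^ 2 ^ j)))"
    by (simp add: power_mult_distrib frob_inv_power mult_ac)
  also have "\<dots> = tr 2 N (x * lin2 K a v)"
    by (simp add: lin2_def sum_distrib_left abs_tr_sum mult.assoc)
  finally show ?thesis .
qed

end

section \<open>The polynomials Tr(A x^(q+1)) + L(x)\<close>

locale even_degree_extension = binary_field "m * n" for m n :: nat +
  assumes m_pos: "m > 0" and even_n: "even n"
begin

abbreviation q :: nat where "q \<equiv> 2 ^ m"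

definition tr_quad :: "'a \<Rightarrow> (nat \<Rightarrow> 'a) \<Rightarrow> 'a \<Rightarrow> 'a" where
  "tr_quad A a x = tr q n (A * x ^ (q + 1)) + lin2 (m * n) a x"

(* Tr(x * polar_coeff A h) is the polar form Tr(A x^q h + A x h^q) of x |-> Tr(A x^(q+1)). *)
definition polar_coeff :: "'a \<Rightarrow> 'a \<Rightarrow> 'a" where
  "polar_coeff A h = (A * h) ^ (q ^ (n - 1)) + A * h ^ q"

lemma card_eq_q_power: "card (UNIV :: 'a set) = q ^ n"
  by (simp add: card_UNIV power_mult)

lemma power_q_power_pred: "((x::'a) ^ (q ^ (n - 1))) ^ q = x"
proof -
  have "n > 0"
    using N_pos by simp
  then have "q ^ (n - 1) * q = card (UNIV :: 'a set)"
    by (simp add: card_eq_q_power power_Suc2[symmetric])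
  then show ?thesis
    by (simp add: power_card_eq_self flip: power_mult)
qed

lemma tr_quad_add:
  "tr_quad A a (x + h) = tr_quad A a x + tr_quad A a h + tr q n (x * polar_coeff A h)"
proof -
  have "(x * (A * h) ^ (q ^ (n - 1))) ^ q = A * (x ^ q * h)"
    using power_mult_distrib[of x "(A * h) ^ (q ^ (n - 1))" q] power_q_power_pred[of "A * h"]
    by (simp only: mult_ac)
  then have "tr q n (A * (x ^ q * h)) = tr q n ((x * (A * h) ^ (q ^ (n - 1))) ^ q)"
    by simp
  also have "\<dots> = tr q n (x * (A * h) ^ (q ^ (n - 1)))"
    by (rule tr_power_base[OF card_eq_q_power])
  finally have cross: "tr q n (A * (x ^ q * h)) = tr q n (x * (A * h) ^ (q ^ (n - 1)))" .
  have expand: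
    "A * (x + h) ^ (q + 1) = A * x ^ (q + 1) + A * (x ^ q * h) + x * (A * h ^ q) + A * h ^ (q + 1)"
    by (simp add: frobenius_add algebra_simps)
  show ?thesis
    unfolding tr_quad_def polar_coeff_def expand additive.add[OF additive_lin2] tr_add distrib_left cross
    by (simp add: ac_simps)
qed

lemma inj_tr_quad_iff:
  "inj (tr_quad A a) \<longleftrightarrow>
     (\<forall>h. h \<noteq> 0 \<longrightarrow> tr_quad A a h \<notin> range (\<lambda>x. tr q n (x * polar_coeff A h)))"
proof -
  have "tr_quad A a (x + h) = tr_quad A a x \<longleftrightarrow> tr_quad A a h = tr q n (x * polar_coeff A h)" for x h
    by (simp add: tr_quad_add add.assoc add_eq_0_iff_eq)
  then show ?thesis
    by (auto simp: inj_iff_shift_neq)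
qed

lemma polar_coeff_eq_0_iff: "polar_coeff A h = 0 \<longleftrightarrow> A ^ q * h ^ q\<^sup>2 = A * h"
proof -
  have "polar_coeff A h ^ q = ((A * h) ^ (q ^ (n - 1))) ^ q + (A * h ^ q) ^ q"
    by (simp only: polar_coeff_def frobenius_add)
  also have "\<dots> = A * h + A ^ q * h ^ q\<^sup>2"
    by (simp only: power_q_power_pred) (simp add: power_mult_distrib power_mult[symmetric] power2_eq_square)
  finally have "polar_coeff A h ^ q = A * h + A ^ q * h ^ q\<^sup>2" .
  moreover have "polar_coeff A h = 0 \<longleftrightarrow> polar_coeff A h ^ q = 0"
    by simp
  ultimately have "polar_coeff A h = 0 \<longleftrightarrow> A * h + A ^ q * h ^ q\<^sup>2 = 0"
    by simp
  then show ?thesis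
    by (auto simp: add_eq_0_iff_eq)
qed

lemma range_tr_mult_polar_coeff:
  "range (\<lambda>x. tr q n (x * polar_coeff A h)) = (if polar_coeff A h = 0 then {0} else frob_fixed q)"
  using range_tr_mult[of m n "polar_coeff A h"] by auto

lemma tr_norm_eq_0:
  assumes "(h::'a) \<in> frob_fixed (q\<^sup>2)"
  shows "tr q n (h ^ (q + 1)) = 0"
proof -
  have "(h ^ (q + 1)) ^ q = h ^ q\<^sup>2 * h ^ q"
    by (simp add: power_mult[symmetric] power_add power2_eq_square algebra_simps)
  then have "h ^ (q + 1) \<in> frob_fixed q"
    using assms by (simp add: frob_fixed_def mult.commute)
  then have "tr q n (h ^ (q + 1)) = of_nat n * h ^ (q + 1)"
    by (simp add: tr_def frob_fixed_def power_power_eq_self)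
  moreover have "(of_nat n :: 'a) = 0"
    using even_n by (simp add: of_nat_eq_0_iff_char_dvd CHAR_eq_2)
  ultimately show ?thesis
    by simp
qed

lemma tr_quad_in_frob_fixed_iff:
  "tr_quad A a h \<in> frob_fixed q \<longleftrightarrow> lin2 (m * n) a h \<in> frob_fixed q"
proof -
  have t: "tr q n (A * h ^ (q + 1)) \<in> frob_fixed q"
    by (rule tr_in_frob_fixed) simp
  have closed: "x \<in> frob_fixed q \<Longrightarrow> y \<in> frob_fixed q \<Longrightarrow> x + y \<in> frob_fixed q" for x y :: 'a
    using add_closed_frob_fixed[of m] by (simp add: add_closed_def)
  have "lin2 (m * n) a h = tr q n (A * h ^ (q + 1)) + tr_quad A a h"
    by (simp add: tr_quad_def add.assoc[symmetric])
  then show ?thesis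
    using closed[OF t] by (metis tr_quad_def)
qed

lemma tr_quad_1_notin_range_iff:
  "tr_quad 1 a h \<notin> range (\<lambda>x. tr q n (x * polar_coeff 1 h)) \<longleftrightarrow>
     (h \<in> frob_fixed (q\<^sup>2) \<longrightarrow> lin2 (m * n) a h \<noteq> 0) \<and>
     (h \<notin> frob_fixed (q\<^sup>2) \<longrightarrow> lin2 (m * n) a h \<notin> frob_fixed q)"
proof -
  have polar_eq_0: "polar_coeff 1 h = 0 \<longleftrightarrow> h \<in> frob_fixed (q\<^sup>2)"
    by (auto simp: polar_coeff_eq_0_iff frob_fixed_def)
  show ?thesis
  proof (cases "h \<in> frob_fixed (q\<^sup>2)")
    case True
    then have "tr_quad 1 a h = lin2 (m * n) a h"
      using tr_norm_eq_0[OF True] by (simp add: tr_quad_def)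
    with True show ?thesis
      by (simp add: range_tr_mult_polar_coeff polar_eq_0)
  qed (simp add: range_tr_mult_polar_coeff polar_eq_0 tr_quad_in_frob_fixed_iff)
qed

lemma inj_tr_quad_1_iff:
  "inj (tr_quad 1 a) \<longleftrightarrow>
     inj (lin2 (m * n) a) \<and> lin2 (m * n) a -` frob_fixed q \<subseteq> frob_fixed (q\<^sup>2)"
  (is "_ \<longleftrightarrow> inj ?L \<and> ?L -` ?W \<subseteq> ?V")
proof -
  have "(0::'a) \<in> ?W" "(0::'a) \<in> ?V"
    by (simp_all add: frob_fixed_def)
  have "inj (tr_quad 1 a) \<longleftrightarrow>
      (\<forall>h. h \<noteq> 0 \<longrightarrow> (h \<in> ?V \<longrightarrow> ?L h \<noteq> 0) \<and> (h \<notin> ?V \<longrightarrow> ?L h \<notin> ?W))"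
    by (simp add: inj_tr_quad_iff tr_quad_1_notin_range_iff)
  also have "\<dots> \<longleftrightarrow> (\<forall>h. ?L h = 0 \<longrightarrow> h = 0) \<and> ?L -` ?W \<subseteq> ?V"
  proof (intro iffI conjI allI impI subsetI)
    fix h
    assume cond: "\<forall>h. h \<noteq> 0 \<longrightarrow> (h \<in> ?V \<longrightarrow> ?L h \<noteq> 0) \<and> (h \<notin> ?V \<longrightarrow> ?L h \<notin> ?W)"
    show "?L h = 0 \<Longrightarrow> h = 0"
      using cond \<open>0 \<in> ?W\<close> by metis
    show "h \<in> ?L -` ?W \<Longrightarrow> h \<in> ?V"
      using cond \<open>0 \<in> ?V\<close> by (cases "h = 0") auto
  qed auto
  finally show ?thesis
    by (simp add: additive.inj_iff_eq_0[OF additive_lin2])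
qed

lemma addker_tr_eq_orth: "addker (tr q n :: 'a \<Rightarrow> 'a) = orth (frob_fixed q)"
  using tr_eq_0_iff_orth[of m n] by (auto simp: addker_def)

lemma addker_tr2_adj2_eq_orth:
  "addker (tr2 q n \<circ> adj2 (m * n) a :: 'a \<Rightarrow> 'a) = orth (lin2 (m * n) a ` frob_fixed (q\<^sup>2))"
proof -
  have tr2_eq: "tr2 q n = (tr (2 ^ (2 * m)) (n div 2) :: 'a \<Rightarrow> 'a)"
    by (simp add: fun_eq_iff tr2_def tr_def power_mult[symmetric] mult.commute)
  have "(2 * m) * (n div 2) = m * n"
    using even_n by simp
  then have "tr2 q n y = 0 \<longleftrightarrow> y \<in> orth (frob_fixed (q\<^sup>2))" for y :: 'a
    unfolding tr2_eq by (simp add: tr_eq_0_iff_orth power_mult[symmetric] mult.commute)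
  then show ?thesis
    by (auto simp: addker_def orth_def tr_adj2_mult)
qed

lemma bij_tr_quad_1_iff:
  "bij (tr_quad 1 a) \<longleftrightarrow>
     addker (tr2 q n \<circ> adj2 (m * n) a) \<subseteq> addker (tr q n) \<and> addker (lin2 (m * n) a) = {0}"
  (is "_ \<longleftrightarrow> _ \<and> addker ?L = {0}")
proof -
  have "bij (tr_quad 1 a) \<longleftrightarrow> inj ?L \<and> ?L -` frob_fixed q \<subseteq> frob_fixed (q\<^sup>2)"
    using finite_UNIV_inj_surj[OF finite, of "tr_quad 1 a"] by (auto simp: bij_def inj_tr_quad_1_iff)
  also have "\<dots> \<longleftrightarrow> inj ?L \<and> frob_fixed q \<subseteq> ?L ` frob_fixed (q\<^sup>2)"
  proof (cases "inj ?L")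
    case True
    then have "bij ?L"
      using finite_UNIV_inj_surj[OF finite] by (simp add: bij_def)
    then show ?thesis
      by (simp add: bij_vimage_subset_iff)
  qed simp
  also have "\<dots> \<longleftrightarrow> inj ?L \<and> orth (?L ` frob_fixed (q\<^sup>2)) \<subseteq> orth (frob_fixed q)"
    using add_closed_image[OF additive_lin2 add_closed_frob_fixed[of "2 * m"]] add_closed_frob_fixed[of m]
    by (simp add: orth_subset_orth_iff power_mult[symmetric] mult.commute)
  finally show ?thesis
    by (auto simp: addker_tr_eq_orth addker_tr2_adj2_eq_orth additive.addker_eq_0_iff_inj[OF additive_lin2])
qed

lemma exists_nonzero_lin2_in_frob_fixed: "\<exists>h::'a. h \<noteq> 0 \<and> lin2 (m * n) a h \<in> frob_fixed q"
proof (cases "inj (lin2 (m * n) a)")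
  case True
  then obtain h where "lin2 (m * n) a h = 1"
    using surjD[OF finite_UNIV_inj_surj[OF finite True], of 1] by auto
  moreover have "h \<noteq> 0"
    using calculation additive.zero[OF additive_lin2] by auto
  ultimately show ?thesis
    by (auto simp: frob_fixed_def)
next
  case False
  then show ?thesis
    by (auto simp: additive.inj_iff_eq_0[OF additive_lin2] frob_fixed_def)
qed

lemma polar_coeff_neq_0:
  assumes "A \<noteq> 0" and "A ^ ((q ^ n - 1) div (q + 1)) \<noteq> 1" and "h \<noteq> 0"
  shows "polar_coeff A h \<noteq> 0"
proof
  assume "polar_coeff A h = 0"
  then have "A ^ q * h ^ q\<^sup>2 = A * h"
    by (simp add: polar_coeff_eq_0_iff)
  moreover have "A ^ q = A * A ^ (q - 1)" and "h ^ q\<^sup>2 = h * h ^ ((q - 1) * (q + 1))"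
    by (simp_all add: power_Suc[symmetric] algebra_simps power2_eq_square)
  ultimately have "A ^ (q - 1) * h ^ ((q - 1) * (q + 1)) = 1"
    using assms(1,3) by (simp add: field_simps)
  then have "A ^ (q - 1) = inverse (h ^ ((q - 1) * (q + 1)))"
    by (metis inverse_unique mult.commute)
  also have "\<dots> = (inverse h ^ (q - 1)) ^ (q + 1)"
    by (simp only: power_mult[symmetric] power_inverse)
  finally have "A ^ (q - 1) = (inverse h ^ (q - 1)) ^ (q + 1)" .
  then show False
    using power_card_div_eq_1[OF card_eq_q_power _ even_n assms(1)] m_pos assms(2) by simp
qed

lemma not_bij_tr_quad:
  assumes "A \<noteq> 0" and "A ^ ((q ^ n - 1) div (q + 1)) \<noteq> 1"
  shows "\<not> bij (tr_quad A a)"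
proof -
  obtain h where "h \<noteq> 0" and "lin2 (m * n) a h \<in> frob_fixed q"
    using exists_nonzero_lin2_in_frob_fixed by blast
  then have "tr_quad A a h \<in> range (\<lambda>x. tr q n (x * polar_coeff A h))"
    using polar_coeff_neq_0[OF assms] by (simp add: range_tr_mult_polar_coeff tr_quad_in_frob_fixed_iff)
  with \<open>h \<noteq> 0\<close> show ?thesis
    by (auto simp: bij_def inj_tr_quad_iff)
qed

end

theorem mainTheorem10:
  fixes m n :: nat and a :: "nat \<Rightarrow> 'a::{finite,field}" and A :: 'a
  assumes "m \<ge> 1" and "even n" and "card (UNIV :: 'a set) = (2 ^ m) ^ n"
  shows "(bij (\<lambda>x::'a. tr (2 ^ m) n (x ^ (2 ^ m + 1)) + lin2 (m * n) a x)
            \<longleftrightarrow> (addker (tr2 (2 ^ m) n \<circ> adj2 (m * n) a) \<subseteq> addker (tr (2 ^ m) n)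
                 \<and> addker (lin2 (m * n) a) = {0}))
       \<and> (A \<noteq> 0 \<longrightarrow> A ^ (((2 ^ m) ^ n - 1) div (2 ^ m + 1)) \<noteq> 1 \<longrightarrow>
            \<not> bij (\<lambda>x::'a. tr (2 ^ m) n (A * x ^ (2 ^ m + 1)) + lin2 (m * n) a x))"
proof -
  interpret even_degree_extension m n
    by unfold_locales (use assms in \<open>simp_all add: power_mult\<close>)
  show ?thesis
    using bij_tr_quad_1_iff[of a] not_bij_tr_quad[of A a] by (simp add: tr_quad_def[abs_def])
qed

end
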